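(* Let $S\subset\mathbb R^2$ be a finite set of $n>4$ points, none of which lies at the center $O$ of SED$(S)$, and with no two points on a common ray from $O$. If $S$ is both Pre-regular and Equiangular, then $S$ is Regular, i.e., its points are the vertices of a regular $n$-gon.
   Context: SED$(S)$ is the smallest closed disk containing $S$, SEC$(S)$ its boundary circle, and $O$ its center. $S$ is \emph{Pre-regular} if there is a regular $n$-gon $P$ (the supporting polygon) such that for every pair of adjacent edges of $P$, one of the two edges contains exactly two points of $S$ (possibly at its endpoints) and the relative interior of the other edge contains no point of $S$. $S$ is \emph{Equiangular} if, listing the points of $S$ as $p_0,\dots,p_{n-1}$ in cyclic order around $O$, every angle $\angle p_iOp_{i+1}$ (indices mod $n$) equals $2\pi/n$. *)

theory Defs
  imports "HOL-Analysis.Analysis"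
begin

text \<open>The plane R^2 is modelled by the complex numbers.\<close>

definition sed_center :: "complex set \<Rightarrow> complex \<Rightarrow> bool" where
  "sed_center S c \<longleftrightarrow>
     (\<exists>r. S \<subseteq> cball c r \<and> (\<forall>c' r'. S \<subseteq> cball c' r' \<longrightarrow> r \<le> r'))"

definition rpoly_vertex :: "complex \<Rightarrow> real \<Rightarrow> real \<Rightarrow> nat \<Rightarrow> nat \<Rightarrow> complex" where
  "rpoly_vertex c r th n k = c + complex_of_real r * cis (th + 2 * pi * real k / real n)"

definition regular_ngon :: "nat \<Rightarrow> complex set \<Rightarrow> bool" where
  "regular_ngon n V \<longleftrightarrow> n \<ge> 3 \<and>
     (\<exists>c r th. r > 0 \<and> V = rpoly_vertex c r th n ` {..<n})"

definition Regular :: "complex set \<Rightarrow> bool" where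
  "Regular S \<longleftrightarrow> regular_ngon (card S) S"

text \<open>S is Pre-regular: there is a regular n-gon (n = |S|) whose k-th edge is the closed
  segment from vertex k to vertex k+1 (indices mod n), such that for each pair of
  adjacent edges, one contains exactly two points of S and the relative interior of the
  other contains no point of S.\<close>
definition Pre_regular :: "complex set \<Rightarrow> bool" where
  "Pre_regular S \<longleftrightarrow> card S \<ge> 3 \<and>
     (\<exists>c r th. r > 0 \<and>
       (let n = card S; v = rpoly_vertex c r th n in
        \<forall>k<n.
          (card (S \<inter> closed_segment (v k) (v (k + 1))) = 2 \<and>
             S \<inter> open_segment (v (k + 1)) (v (k + 2)) = {}) \<or>
          (card (S \<inter> closed_segment (v (k + 1)) (v (k + 2))) = 2 \<and>
             S \<inter> open_segment (v k) (v (k + 1)) = {})))"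

definition angle_at :: "complex \<Rightarrow> complex \<Rightarrow> complex \<Rightarrow> real" where
  "angle_at c0 p q = arccos (((p - c0) \<bullet> (q - c0)) / (norm (p - c0) * norm (q - c0)))"

text \<open>S is Equiangular w.r.t. center O: listing S as p_0..p_{n-1} in counterclockwise
  cyclic order around O (arguments a_0 < ... < a_{n-1} < a_0 + 2 pi), every angle
  p_i O p_{i+1} (indices mod n) equals 2 pi / n.\<close>
definition Equiangular :: "complex set \<Rightarrow> complex \<Rightarrow> bool" where
  "Equiangular S c0 \<longleftrightarrow>
     (let n = card S in
      \<exists>p :: nat \<Rightarrow> complex. \<exists>a :: nat \<Rightarrow> real.
        bij_betw p {..<n} S \<and>
        (\<forall>i<n. p i = c0 + complex_of_real (norm (p i - c0)) * cis (a i)) \<and>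
        (\<forall>i j. i < j \<and> j < n \<longrightarrow> a i < a j) \<and>
        (\<forall>i<n. a i < a 0 + 2 * pi) \<and>
        (\<forall>i<n. angle_at c0 (p i) (p ((i + 1) mod n)) = 2 * pi / real n))"

end

theory Submission
  imports Defs
begin

(* Let P be the supporting regular n-gon of S (centre c, circumradius r) and
   call an edge of P "full" if it carries exactly two points of S.  Pre-regularity says that
   of any two consecutive edges at least one is full, and a counting argument shows that the
   full edges cover S.  Hence S lies in P, and since the centre O of SED(S) can be separated
   from S by no line, O lies in every supporting half-plane of P as well.
   Equiangularity implies that any two points of S subtend an angle of at least 2pi/n at O.
   A full edge k carries two such points, and an elementary computation in the frame of that
   edge yields  |O - c|^2 <= (r / cos(pi/n)) * <O - c, u_k>,  u_k the outer normal of edge k.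
   Because full edges occur among any two consecutive edges, these inequalities force O = c;
   with O = c the same computation shows that the two points of S on a full edge are its
   endpoints.  So every vertex of P lies in S, and counting gives S = vertices of P. *)

section \<open>Trigonometric facts\<close>

lemma cos_lt_cos_pi_div:
  fixes n :: nat and x :: real
  assumes "n \<ge> 3" "pi / n < x" "x < 2*pi - pi/n"
  shows "cos x < cos (pi / n)"
proof -
  have n0: "real n > 0" using assms by simp
  have a0: "0 \<le> pi/n" "pi/n \<le> pi" using n0 by (auto simp: field_simps)
  show ?thesis
  proof (cases "x \<le> pi")
    case True
    then show ?thesis using cos_mono_less_eq[of x "pi/n"] a0 assms(2) by auto
  next
    case False
    have "cos x = cos (2*pi - x)" by simp
    also have "\<dots> < cos (pi/n)" using cos_mono_less_eq[of "2*pi - x" "pi/n"] a0 assms False by auto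
    finally show ?thesis .
  qed
qed

text \<open>Among the odd multiples of pi/n, the cosine is maximal exactly at plus or minus pi/n
  (modulo 2 pi); this is the support function of a regular polygon evaluated at its vertices.\<close>
lemma cos_odd_multiple_le:
  fixes n :: nat and d :: int
  assumes "n \<ge> 3"
  shows "cos ((2*d - 1) * pi / n) \<le> cos (pi / n) \<and>
    (cos ((2*d - 1) * pi / n) = cos (pi / n) \<longrightarrow> d mod n = 0 \<or> d mod n = 1)"
proof -
  define d' where "d' = d mod n"
  define q where "q = d div n"
  have n0: "real n > 0" using assms by simp
  have dd: "d = d' + int n * q" unfolding d'_def q_def by simp
  have d'r: "0 \<le> d'" "d' < int n" unfolding d'_def using assms by auto
  have "(2*d - 1) * pi / n = (2*d' - 1) * pi / n + 2 * pi * of_int q"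
    using n0 by (simp add: dd field_simps)
  then have eq: "cos ((2*d - 1) * pi / n) = cos ((2*d' - 1) * pi / n)"
    by (simp add: cos_add)
  consider "d' = 0" | "d' = 1" | "d' \<ge> 2" using d'r by linarith
  then show ?thesis
  proof cases
    case 1
    then have "real_of_int (2*d' - 1) * pi / n = - (pi / n)" by simp
    then show ?thesis using eq 1 d'_def by simp
  next
    case 2
    then show ?thesis using eq d'_def by simp
  next
    case 3
    have r: "real_of_int d' \<ge> 2" "real_of_int d' \<le> real n - 1" using 3 d'r by linarith+
    have "pi / n < (2*d' - 1) * pi / n"
      using n0 r by (simp add: divide_strict_right_mono)
    moreover have "(2*d' - 1) * pi / n < 2*pi - pi/n"
    proof -
      have "(2*d' - 1) * pi \<le> (2*real n - 3) * pi" using r by (simp add: mult_right_mono)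
      also have "\<dots> < (2 * real n - 1) * pi" by simp
      finally show ?thesis using n0 by (simp add: field_simps)
    qed
    ultimately have "cos ((2*d' - 1) * pi / n) < cos (pi/n)" using cos_lt_cos_pi_div assms by blast
    then show ?thesis using eq by simp
  qed
qed

lemma trig_facts_pi_div:
  fixes n :: nat
  assumes "n \<ge> 5"
  shows "cos (pi / n) > 0" "sin (pi / n) > 0" "cos (pi/n)^2 + sin (pi/n)^2 = 1"
    "cos (2*pi/n) = cos (pi/n)^2 - sin (pi/n)^2" "sin (2*pi/n) = 2 * sin (pi/n) * cos (pi/n)"
    "cos (2*pi/n) > 0"
proof -
  have n0: "real n \<ge> 5" using assms by simp
  have a: "0 < pi / n" "pi / n < pi / 2" using n0 by (auto simp: field_simps)
  show "cos (pi / n) > 0" using a by (intro cos_gt_zero) auto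
  show "sin (pi / n) > 0" using a pi_gt_zero by (intro sin_gt_zero) linarith+
  show "cos (pi/n)^2 + sin (pi/n)^2 = 1" by simp
  show "cos (2*pi/n) = cos (pi/n)^2 - sin (pi/n)^2" using cos_double[of "pi/n"] by simp
  show "sin (2*pi/n) = 2 * sin (pi/n) * cos (pi/n)" using sin_double[of "pi/n"] by simp
  have b: "2*pi/n < pi/2" using n0 by (auto simp: field_simps)
  have b0: "0 < 2*pi/n" using n0 by simp
  show "cos (2*pi/n) > 0" using b b0 by (intro cos_gt_zero) auto
qed

lemma cos_le_cos_on_range:
  assumes "0 < al" "al \<le> pi" "al \<le> x" "x \<le> 2*pi - al"
  shows "cos x \<le> cos al"
proof (cases "x \<le> pi")
  case True
  then show ?thesis using assms by (intro cos_monotone_0_pi_le) auto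
next
  case False
  have "cos x = cos (2*pi - x)" by simp
  also have "\<dots> \<le> cos al" using assms False by (intro cos_monotone_0_pi_le) auto
  finally show ?thesis .
qed

lemma ge_of_cos_eq:
  assumes "0 < g" "g < 2*pi" "cos g = cos al" "0 < al" "al \<le> pi"
  shows "al \<le> g"
proof (rule ccontr)
  assume "\<not> al \<le> g"
  then have "cos al < cos g" using assms by (intro cos_monotone_0_pi) auto
  then show False using assms by simp
qed

lemma cos_nonpos_range: "-(3*pi/2) \<le> x \<Longrightarrow> x \<le> -(pi/2) \<Longrightarrow> cos x \<le> 0"
proof -
  assume "-(3*pi/2) \<le> x" "x \<le> -(pi/2)"
  then have "0 \<le> cos (x + pi)" by (intro cos_ge_zero) auto
  then show "cos x \<le> 0" by simp
qed

lemma cis_cnj_mult: "cis a * cnj (cis b) = cis (a - b)"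
  by (simp add: cis_cnj cis_mult)

lemma Re_mult_cnj_cis: "Re (d * cnj (cis phi)) = cmod d * cos (Arg d - phi)"
proof -
  have "d = complex_of_real (cmod d) * cis (Arg d)" using rcis_cmod_Arg[of d] unfolding rcis_def by simp
  then have "d * cnj (cis phi) = complex_of_real (cmod d) * cis (Arg d - phi)"
    by (metis cis_cnj_mult mult.assoc)
  then show ?thesis by simp
qed

section \<open>Geometry of a regular polygon\<close>

lemma rpoly_vertex_mod:
  assumes "n > 0"
  shows "rpoly_vertex c r th n (k mod n) = rpoly_vertex c r th n k"
proof -
  have "real k = real (k mod n) + real n * real (k div n)"
    by (metis of_nat_add of_nat_mult mod_div_mult_eq add.commute mult.commute)
  then have "th + 2 * pi * real k / real n
      = th + 2 * pi * real (k mod n) / real n + 2 * pi * real (k div n)"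
    using assms by (simp add: field_simps)
  then have "cis (th + 2 * pi * real k / real n) = cis (th + 2 * pi * real (k mod n) / real n)"
    by (metis cis_mult cis_multiple_2pi mult_1_right of_int_of_nat_eq Ints_of_int)
  then show ?thesis unfolding rpoly_vertex_def by simp
qed

text \<open>The unit outer normal of the k-th edge (from vertex k to vertex k+1) of the regular
  n-gon with phase th; it points to the midpoint of that edge.\<close>
definition edge_normal :: "real \<Rightarrow> nat \<Rightarrow> nat \<Rightarrow> complex" where
  "edge_normal th n k = cis (th + 2 * pi * real k / real n + pi / real n)"

lemma edge_normal_unit: "edge_normal th n k * cnj (edge_normal th n k) = 1"
  unfolding edge_normal_def by (simp add: cis_cnj cis_mult)

lemma vertex_in_edge_frame:
  assumes "n > 0"
  shows "(rpoly_vertex c r th n j - c) * cnj (edge_normal th n k)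
     = complex_of_real r * cis ((2 * (int j - int k) - 1) * pi / n)"
proof -
  have "(rpoly_vertex c r th n j - c) * cnj (edge_normal th n k)
     = complex_of_real r * cis ((th + 2 * pi * real j / real n)
         - (th + 2 * pi * real k / real n + pi / real n))"
    unfolding rpoly_vertex_def edge_normal_def by (simp add: mult.assoc cis_cnj_mult)
  moreover have "(th + 2 * pi * real j / real n) - (th + 2 * pi * real k / real n + pi / real n)
     = (2 * (int j - int k) - 1) * pi / n"
    using assms by (simp add: field_simps)
  ultimately show ?thesis by simp
qed

lemma vertex_support:
  assumes "n \<ge> 3" "r > 0"
  shows "Re ((rpoly_vertex c r th n j - c) * cnj (edge_normal th n k)) \<le> r * cos (pi / n)"
    and "Re ((rpoly_vertex c r th n j - c) * cnj (edge_normal th n k)) = r * cos (pi / n)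
       \<Longrightarrow> (int j - int k) mod int n = 0 \<or> (int j - int k) mod int n = 1"
  using vertex_in_edge_frame[of n c r th j k] cos_odd_multiple_le[OF assms(1), of "int j - int k"] assms
  by (auto simp: mult_left_mono)

lemma edge_endpoints_support:
  assumes "n \<ge> 3"
  shows "Re ((rpoly_vertex c r th n k - c) * cnj (edge_normal th n k)) = r * cos (pi / n)"
    and "Re ((rpoly_vertex c r th n (Suc k) - c) * cnj (edge_normal th n k)) = r * cos (pi / n)"
proof -
  have n0: "n > 0" using assms by simp
  have "real_of_int (2 * (int k - int k) - 1) * pi / real n = - (pi / n)" by simp
  then show "Re ((rpoly_vertex c r th n k - c) * cnj (edge_normal th n k)) = r * cos (pi / n)"
    using vertex_in_edge_frame[OF n0, of c r th k k] by simp
  have "real_of_int (2 * (int (Suc k) - int k) - 1) * pi / real n = pi / n" by simp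
  then show "Re ((rpoly_vertex c r th n (Suc k) - c) * cnj (edge_normal th n k)) = r * cos (pi / n)"
    using vertex_in_edge_frame[OF n0, of c r th "Suc k" k] by simp
qed

lemma int_diff_mod:
  fixes j k n :: nat
  assumes "j < n" "k < n"
  shows "(int j - int k) mod int n = (if k \<le> j then int j - int k else int j - int k + int n)"
proof (cases "k \<le> j")
  case True
  then show ?thesis using assms by (simp add: mod_pos_pos_trivial)
next
  case False
  have "(int j - int k) mod int n = (int j - int k + int n) mod int n" by simp
  also have "\<dots> = int j - int k + int n" using assms False by (intro mod_pos_pos_trivial) auto
  finally show ?thesis using False by simp
qed

lemma rpoly_vertex_inj:
  assumes "n \<ge> 3" "r > 0" "j < n" "k < n" "rpoly_vertex c r th n j = rpoly_vertex c r th n k"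
  shows "j = k"
proof -
  have "Re ((rpoly_vertex c r th n j - c) * cnj (edge_normal th n k)) = r * cos (pi / n)"
    "Re ((rpoly_vertex c r th n k - c) * cnj (edge_normal th n j)) = r * cos (pi / n)"
    using assms(5) edge_endpoints_support(1)[OF assms(1), of c r th] by metis+
  from this[THEN vertex_support(2)[OF assms(1,2)]] show ?thesis
    using int_diff_mod[OF assms(3,4)] int_diff_mod[OF assms(4,3)] assms(1)
    by (auto split: if_splits)
qed

lemma rpoly_vertex_Suc_neq:
  assumes "n \<ge> 3" "r > 0" "k < n"
  shows "rpoly_vertex c r th n k \<noteq> rpoly_vertex c r th n (Suc k)"
proof
  assume eq: "rpoly_vertex c r th n k = rpoly_vertex c r th n (Suc k)"
  have n0: "n > 0" using assms by simp
  then have "rpoly_vertex c r th n k = rpoly_vertex c r th n (Suc k mod n)"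
    using eq rpoly_vertex_mod by metis
  then have "k = Suc k mod n" using rpoly_vertex_inj[OF assms(1,2,3)] n0 by simp
  moreover have "Suc k mod n = (if Suc k = n then 0 else Suc k)" using assms(3) by (auto simp: mod_Suc)
  ultimately show False using assms(1) by (cases "Suc k = n") simp_all
qed

lemma rpoly_vertices_card:
  assumes "n \<ge> 3" "r > 0"
  shows "card (rpoly_vertex c r th n ` {..<n}) = n"
proof -
  have "inj_on (rpoly_vertex c r th n) {..<n}"
    by (rule inj_onI) (use rpoly_vertex_inj[OF assms] in auto)
  then show ?thesis by (simp add: card_image)
qed

lemma closed_segment_param:
  assumes "z \<in> closed_segment a b"
  obtains t where "0 \<le> t" "t \<le> 1" "z = complex_of_real (1 - t) * a + complex_of_real t * b"
  using assms unfolding closed_segment_def by (auto simp: scaleR_conv_of_real)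

lemma Re_affine_combination:
  assumes "z = complex_of_real (1 - t) * a + complex_of_real t * b"
  shows "Re ((z - c) * cnj E) = (1 - t) * Re ((a - c) * cnj E) + t * Re ((b - c) * cnj E)"
proof -
  have "z - c = complex_of_real (1 - t) * (a - c) + complex_of_real t * (b - c)"
    using assms by (simp add: algebra_simps)
  then have "(z - c) * cnj E
      = complex_of_real (1 - t) * ((a - c) * cnj E) + complex_of_real t * ((b - c) * cnj E)"
    by (simp only: ring_distribs mult.assoc)
  then show ?thesis by simp
qed

lemma edge_support:
  assumes "n \<ge> 3" "r > 0"
    and "z \<in> closed_segment (rpoly_vertex c r th n j) (rpoly_vertex c r th n (Suc j))"
  shows "Re ((z - c) * cnj (edge_normal th n k)) \<le> r * cos (pi / n)"
proof -
  define sg where "sg x = Re ((x - c) * cnj (edge_normal th n k))" for x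
  obtain t where t: "0 \<le> t" "t \<le> 1"
    "z = complex_of_real (1 - t) * rpoly_vertex c r th n j + complex_of_real t * rpoly_vertex c r th n (Suc j)"
    using closed_segment_param[OF assms(3)] by blast
  have sgz: "sg z = (1 - t) * sg (rpoly_vertex c r th n j) + t * sg (rpoly_vertex c r th n (Suc j))"
    unfolding sg_def by (rule Re_affine_combination[OF t(3)])
  have "(1 - t) * sg (rpoly_vertex c r th n j) + t * sg (rpoly_vertex c r th n (Suc j))
      \<le> (1 - t) * (r * cos (pi / n)) + t * (r * cos (pi / n))"
    using vertex_support(1)[OF assms(1,2)] t(1,2) unfolding sg_def
    by (intro add_mono mult_left_mono) auto
  then show ?thesis using sgz unfolding sg_def by (simp add: algebra_simps)
qed

lemma small_diff_mod:
  fixes D :: int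
  assumes "n \<ge> 2" "- int n < D" "D \<le> int n"
  shows "(D mod int n = 0 \<longleftrightarrow> D = 0 \<or> D = int n) \<and> (D mod int n = 1 \<longleftrightarrow> D = 1 \<or> D = 1 - int n)"
proof -
  consider "D < 0" | "D = int n" | "0 \<le> D" "D < int n" using assms by linarith
  then show ?thesis
  proof cases
    case 1
    have "D mod int n = (D + int n) mod int n" by simp
    also have "\<dots> = D + int n" using 1 assms by (intro mod_pos_pos_trivial) auto
    finally show ?thesis using 1 assms by auto
  next
    case 2 then show ?thesis using assms by auto
  next
    case 3 then show ?thesis using assms by (auto simp: mod_pos_pos_trivial)
  qed
qed

lemma edges_meet_at_vertex:
  fixes c :: complex and r th :: real and n j k :: nat
  defines "V \<equiv> rpoly_vertex c r th n"
  assumes n3: "n \<ge> 3" and r0: "r > 0" and jk: "j < n" "k < n" "j \<noteq> k"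
    and zj: "z \<in> closed_segment (V j) (V (Suc j))" and zk: "z \<in> closed_segment (V k) (V (Suc k))"
  shows "(k = Suc j mod n \<and> z = V k) \<or> (j = Suc k mod n \<and> z = V j)"
proof -
  define H where "H = r * cos (pi / n)"
  define sg where "sg x = Re ((x - c) * cnj (edge_normal th n k))" for x
  have n0: "n > 0" using n3 by simp
  have sz: "sg z = H"
  proof -
    obtain t where "z = complex_of_real (1 - t) * V k + complex_of_real t * V (Suc k)"
      using closed_segment_param[OF zk] by blast
    then have "sg z = (1 - t) * sg (V k) + t * sg (V (Suc k))"
      unfolding sg_def by (rule Re_affine_combination)
    also have "\<dots> = (1 - t) * H + t * H"
      using edge_endpoints_support[OF n3, of c r th k] unfolding sg_def H_def V_def by simp
    finally show ?thesis by (simp add: algebra_simps)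
  qed
  obtain s where s: "0 \<le> s" "s \<le> 1" "z = complex_of_real (1 - s) * V j + complex_of_real s * V (Suc j)"
    using closed_segment_param[OF zj] by blast
  have comb: "(1 - s) * sg (V j) + s * sg (V (Suc j)) = H"
    using Re_affine_combination[OF s(3)] sz unfolding sg_def by simp
  have A: "sg (V j) \<le> H" "sg (V j) = H \<Longrightarrow> (int j - int k) mod int n = 0 \<or> (int j - int k) mod int n = 1"
    using vertex_support[OF n3 r0, of c th j k] unfolding sg_def H_def V_def by auto
  have B: "sg (V (Suc j)) \<le> H" "sg (V (Suc j)) = H \<Longrightarrow>
      (int (Suc j) - int k) mod int n = 0 \<or> (int (Suc j) - int k) mod int n = 1"
    using vertex_support[OF n3 r0, of c th "Suc j" k] unfolding sg_def H_def V_def by auto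
  have m1: "(int j - int k) mod int n = 0 \<longleftrightarrow> int j - int k = 0 \<or> int j - int k = int n"
     "(int j - int k) mod int n = 1 \<longleftrightarrow> int j - int k = 1 \<or> int j - int k = 1 - int n"
    using small_diff_mod[of n "int j - int k"] n3 jk by auto
  have m2: "(int (Suc j) - int k) mod int n = 0 \<longleftrightarrow> int (Suc j) - int k = 0 \<or> int (Suc j) - int k = int n"
     "(int (Suc j) - int k) mod int n = 1 \<longleftrightarrow> int (Suc j) - int k = 1 \<or> int (Suc j) - int k = 1 - int n"
    using small_diff_mod[of n "int (Suc j) - int k"] n3 jk by auto
  text \<open>If z is not the far endpoint, the near endpoint V j is on the supporting line of edge k.\<close>
  have j_after_k: "int j - int k = 1 \<or> int j - int k = 1 - int n" if "s < 1"
  proof -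
    have "(1 - s) * (H - sg (V j)) = s * (sg (V (Suc j)) - H)" using comb by (simp add: algebra_simps)
    also have "\<dots> \<le> 0" using B(1) s(1) by (simp add: mult_nonneg_nonpos)
    finally have "H - sg (V j) \<le> 0" using \<open>s < 1\<close> by (simp add: mult_le_0_iff)
    then have "sg (V j) = H" using A(1) by linarith
    then show ?thesis using A(2) m1 jk by auto
  qed
  have k_after_j: "int (Suc j) - int k = 0 \<or> int (Suc j) - int k = int n" if "s > 0"
  proof -
    have "s * (H - sg (V (Suc j))) = (1 - s) * (sg (V j) - H)" using comb by (simp add: algebra_simps)
    also have "\<dots> \<le> 0" using A(1) s(2) by (simp add: mult_nonneg_nonpos)
    finally have "H - sg (V (Suc j)) \<le> 0" using \<open>s > 0\<close> by (simp add: mult_le_0_iff)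
    then have "sg (V (Suc j)) = H" using B(1) by linarith
    then show ?thesis using B(2) m2 jk by auto
  qed
  have "s = 0 \<or> s = 1"
    using j_after_k k_after_j s(1,2) n3 by fastforce
  then show ?thesis
  proof
    assume "s = 0"
    then show ?thesis using s(3) j_after_k jk by (auto simp: mod_Suc)
  next
    assume "s = 1"
    then have k: "k = Suc j mod n" using k_after_j jk by (auto simp: mod_Suc)
    have "z = V (Suc j)" using s(3) \<open>s = 1\<close> by simp
    also have "\<dots> = V k" unfolding k V_def by (rule rpoly_vertex_mod[OF n0, symmetric])
    finally show ?thesis using k by blast
  qed
qed

section \<open>Full edges of the supporting polygon\<close>

definition full_edges :: "complex set \<Rightarrow> complex \<Rightarrow> real \<Rightarrow> real \<Rightarrow> nat \<Rightarrow> nat set" where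
  "full_edges S c r th n = {k. k < n \<and>
     card (S \<inter> closed_segment (rpoly_vertex c r th n k) (rpoly_vertex c r th n (Suc k))) = 2}"

lemma Pre_regular_full_edges:
  assumes "Pre_regular S"
  obtains c r th where "r > 0"
    "\<forall>k<card S. k \<in> full_edges S c r th (card S) \<or> Suc k mod card S \<in> full_edges S c r th (card S)"
proof -
  define n where "n = card S"
  have n0: "n > 0" using assms unfolding Pre_regular_def n_def by simp
  obtain c r th where r0: "r > 0" and pre: "\<forall>k<n.
      card (S \<inter> closed_segment (rpoly_vertex c r th n k) (rpoly_vertex c r th n (k + 1))) = 2 \<or>
      card (S \<inter> closed_segment (rpoly_vertex c r th n (k + 1)) (rpoly_vertex c r th n (k + 2))) = 2"
    using assms unfolding Pre_regular_def n_def Let_def by metis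
  define V where "V = rpoly_vertex c r th n"
  have "k \<in> full_edges S c r th n \<or> Suc k mod n \<in> full_edges S c r th n" if kn: "k < n" for k
  proof -
    have "V (Suc k mod n) = V (Suc k)" "V (Suc (Suc k mod n)) = V (Suc (Suc k))"
      unfolding V_def by (metis rpoly_vertex_mod[OF n0] mod_Suc_eq)+
    then show ?thesis using pre kn n0 unfolding full_edges_def V_def by auto
  qed
  then show ?thesis using that r0 unfolding n_def by blast
qed

lemma pred_mod:
  fixes k n :: nat
  assumes "k < n"
  shows "(k + n - 1) mod n < n" "Suc ((k + n - 1) mod n) mod n = k"
proof -
  show "(k + n - 1) mod n < n" using assms by simp
  show "Suc ((k + n - 1) mod n) mod n = k"
  proof (cases "k = 0")
    case True
    then have "(k + n - 1) mod n = n - 1" using assms by simp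
    then show ?thesis using True assms by simp
  next
    case False
    then have "k + n - 1 = (k - 1) + n" by simp
    then have "(k + n - 1) mod n = (k - 1) mod n" by simp
    also have "\<dots> = k - 1" using assms False by simp
    finally show ?thesis using assms False by simp
  qed
qed

lemma full_edge_points:
  fixes c :: complex and r th :: real and n :: nat
  defines "V \<equiv> rpoly_vertex c r th n"
  assumes n3: "n \<ge> 3" and r0: "r > 0" and kF: "k \<in> full_edges S c r th n"
  obtains x y where "x \<in> S" "y \<in> S" "x \<noteq> y" "x \<in> closed_segment (V k) (V (Suc k))"
    "y \<in> closed_segment (V k) (V (Suc k))" "x \<noteq> V (Suc k)" "y \<noteq> V k"
proof -
  have "card (S \<inter> closed_segment (V k) (V (Suc k))) = 2" "k < n"
    using kF unfolding full_edges_def V_def by auto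
  then obtain x y where xy: "x \<noteq> y" "S \<inter> closed_segment (V k) (V (Suc k)) = {x, y}"
    by (auto simp: card_2_iff)
  have ne: "V k \<noteq> V (Suc k)" unfolding V_def using rpoly_vertex_Suc_neq[OF n3 r0 \<open>k < n\<close>] .
  show ?thesis
  proof (cases "x \<noteq> V (Suc k) \<and> y \<noteq> V k")
    case True
    then show ?thesis using that xy by blast
  next
    case False
    then have "y \<noteq> V (Suc k)" "x \<noteq> V k" using xy(1) ne by metis+
    then show ?thesis using that[of y x] xy by blast
  qed
qed

text \<open>If among any two consecutive edges one is full, the full edges cover S: choosing two
  points on each full edge and assigning one of them to each edge injectively accounts for
  n distinct points of S, which are therefore all of S.\<close>
lemma full_edges_cover:
  fixes S :: "complex set" and c :: complex and r th :: real and n :: nat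
  defines "V \<equiv> rpoly_vertex c r th n" and "F \<equiv> full_edges S c r th n"
  assumes fin: "finite S" and cardS: "card S = n" and n3: "n \<ge> 3" and r0: "r > 0"
    and cov: "\<forall>k<n. k \<in> F \<or> Suc k mod n \<in> F"
  shows "S \<subseteq> (\<Union>k\<in>F. closed_segment (V k) (V (Suc k)))"
proof -
  define T where "T k = S \<inter> closed_segment (V k) (V (Suc k))" for k
  have n0: "n > 0" using n3 by simp
  have Vmod: "V (m mod n) = V m" for m unfolding V_def by (rule rpoly_vertex_mod[OF n0])
  have "\<forall>k\<in>F. \<exists>p. fst p \<in> T k \<and> snd p \<in> T k \<and> fst p \<noteq> snd p \<and> fst p \<noteq> V (Suc k) \<and> snd p \<noteq> V k"
  proof
    fix k assume "k \<in> F"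
    from full_edge_points[OF n3 r0 this[unfolded F_def]] obtain x y where
      "x \<in> T k" "y \<in> T k" "x \<noteq> y" "x \<noteq> V (Suc k)" "y \<noteq> V k"
      unfolding T_def V_def by (metis IntI)
    then show "\<exists>p. fst p \<in> T k \<and> snd p \<in> T k \<and> fst p \<noteq> snd p \<and> fst p \<noteq> V (Suc k) \<and> snd p \<noteq> V k"
      by (intro exI[of _ "(x, y)"]) simp
  qed
  from bchoice[OF this] obtain P where P: "\<forall>k\<in>F. fst (P k) \<in> T k \<and> snd (P k) \<in> T k \<and>
      fst (P k) \<noteq> snd (P k) \<and> fst (P k) \<noteq> V (Suc k) \<and> snd (P k) \<noteq> V k"
    by blast
  define pr where "pr k = (k + n - 1) mod n" for k
  have pr: "k < n \<Longrightarrow> pr k < n \<and> Suc (pr k) mod n = k" for k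
    using pred_mod[of k n] unfolding pr_def by auto
  have prF: "pr k \<in> F" if "k < n" "k \<notin> F" for k
    using cov that pr[OF that(1)] by metis
  have Fn: "k \<in> F \<Longrightarrow> k < n" for k unfolding F_def full_edges_def by simp
  text \<open>Vertex-free assignment: edge k gets the first point of edge k if k is full, and
    otherwise the second point of the (full) preceding edge.\<close>
  define m where "m k = (if k \<in> F then k else pr k)" for k
  define g where "g k = (if k \<in> F then fst (P k) else snd (P (pr k)))" for k
  have mF: "k < n \<Longrightarrow> m k \<in> F \<and> m k < n" for k unfolding m_def using prF pr Fn by auto
  have gT: "k < n \<Longrightarrow> g k \<in> T (m k)" for k unfolding g_def m_def using P prF by auto
  have inj: "inj_on g {..<n}"
  proof (rule inj_onI, rule ccontr)
    fix j k assume j: "j \<in> {..<n}" and k: "k \<in> {..<n}" and eq: "g j = g k" and jk: "j \<noteq> k"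
    have jn: "j < n" and kn: "k < n" using j k by auto
    have segs: "g j \<in> closed_segment (V (m j)) (V (Suc (m j)))" "g j \<in> closed_segment (V (m k)) (V (Suc (m k)))"
      using gT[OF jn] gT[OF kn] eq unfolding T_def by auto
    have mn: "m j < n" "m k < n" "m j \<in> F" "m k \<in> F" using mF jn kn by auto
    show False
    proof (cases "m j = m k")
      case True
      then show False
        using eq P mn jk pr[OF jn] pr[OF kn] unfolding g_def m_def by (auto split: if_splits)
    next
      case False
      note meet = edges_meet_at_vertex[OF n3 r0 mn(1,2) False, where z = "g j" and c = c and th = th,
          folded V_def, OF segs]
      have gv: "g j \<noteq> V (Suc (m j))" if "j \<in> F" using that P eq mn unfolding g_def m_def by auto
      have gv': "g j \<noteq> V (Suc (m k))" if "k \<in> F" using that P eq mn unfolding g_def m_def by auto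
      have gl: "g j \<noteq> V (m j)" if "j \<notin> F" using that P eq mn unfolding g_def m_def by auto
      have gl': "g j \<noteq> V (m k)" if "k \<notin> F" using that P eq mn unfolding g_def m_def by auto
      show False
      proof (cases "m k = Suc (m j) mod n \<and> g j = V (m k)")
        case True
        then have A: "g j = V (Suc (m j))" using Vmod by metis
        have "k \<in> F" using True gl' by blast
        then have "m k = k" unfolding m_def by simp
        then show False using gv A True pr[OF jn] jk unfolding m_def by (cases "j \<in> F") auto
      next
        case False
        then have T2: "m j = Suc (m k) mod n" "g j = V (m j)" using meet by auto
        then have A: "g j = V (Suc (m k))" using Vmod by metis
        have "j \<in> F" using T2 gl by blast
        then have "m j = j" unfolding m_def by simp
        then show False using gv' A T2 pr[OF kn] jk unfolding m_def by (cases "k \<in> F") auto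
      qed
    qed
  qed
  have gS: "g ` {..<n} \<subseteq> S" using gT unfolding T_def by auto
  have "card (g ` {..<n}) = n" using inj by (simp add: card_image)
  then have "g ` {..<n} = S" using card_subset_eq[OF fin gS] cardS by simp
  then show ?thesis using gT mF unfolding T_def by fastforce
qed

lemma full_edges_cover_support:
  assumes fin: "finite S" and n3: "card S \<ge> 3" and r0: "r > 0"
    and cov: "\<forall>k<card S. k \<in> full_edges S c r th (card S) \<or> Suc k mod card S \<in> full_edges S c r th (card S)"
    and sS: "s \<in> S"
  shows "Re ((s - c) * cnj (edge_normal th (card S) k)) \<le> r * cos (pi / card S)"
  using full_edges_cover[OF fin refl n3 r0 cov] sS edge_support[OF n3 r0] by blast

section \<open>The centre of the smallest enclosing disk\<close>

lemma dist_after_shift: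
  assumes "cmod (s - c0) \<le> r" "Re ((s - c0) * cnj u) \<le> - dl" "e \<ge> 0"
  shows "cmod (s - (c0 - complex_of_real e * u))^2 \<le> r^2 - 2 * e * dl + e^2 * cmod u ^ 2"
proof -
  have "cmod (s - (c0 - complex_of_real e * u))^2
      = cmod (s - c0)^2 + 2 * e * Re ((s - c0) * cnj u) + e^2 * cmod u ^ 2"
    by (simp only: cmod_power2) (simp add: power2_eq_square algebra_simps)
  also have "cmod (s - c0)^2 \<le> r^2"
    using assms(1) by (simp add: abs_le_square_iff power2_eq_square mult_mono')
  also have "2 * e * Re ((s - c0) * cnj u) \<le> 2 * e * (- dl)"
    using assms(2,3) by (intro mult_left_mono) auto
  finally show ?thesis by simp
qed

text \<open>No open half-plane whose boundary passes through the centre of SED(S) contains all of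
  S; otherwise moving the centre into that half-plane would shrink the disk.\<close>
lemma sed_center_halfplane:
  fixes S :: "complex set" and c0 u :: complex
  assumes sed: "sed_center S c0" and fin: "finite S" and ne: "S \<noteq> {}"
  shows "\<exists>s\<in>S. Re ((s - c0) * cnj u) \<ge> 0"
proof (rule ccontr)
  assume "\<not> ?thesis"
  then have neg: "\<forall>s\<in>S. Re ((s - c0) * cnj u) < 0" by auto
  obtain r where r: "S \<subseteq> cball c0 r" and rmin: "\<forall>c' r'. S \<subseteq> cball c' r' \<longrightarrow> r \<le> r'"
    using sed unfolding sed_center_def by blast
  obtain s0 where s0: "s0 \<in> S" using ne by blast
  have u0: "u \<noteq> 0" using neg s0 by fastforce
  define dl where "dl = Min ((\<lambda>s. - Re ((s - c0) * cnj u)) ` S)"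
  have dl0: "dl > 0" unfolding dl_def using fin ne neg by (subst Min_gr_iff) auto
  have dlle: "Re ((s - c0) * cnj u) \<le> - dl" if "s \<in> S" for s
  proof -
    have "dl \<le> - Re ((s - c0) * cnj u)" unfolding dl_def using fin that by simp
    then show ?thesis by linarith
  qed
  define e where "e = dl / cmod u ^ 2"
  have cu: "cmod u ^ 2 > 0" using u0 by simp
  have e0: "e > 0" unfolding e_def using dl0 cu by simp
  have eu: "e^2 * cmod u ^ 2 = e * dl" unfolding e_def using cu by (simp add: power2_eq_square)
  have "dist c0 s0 \<le> r" using r s0 by auto
  then have rr: "r \<ge> 0" using zero_le_dist[of c0 s0] by linarith
  define r' where "r' = sqrt (r^2 - e * dl)"
  have "S \<subseteq> cball (c0 - complex_of_real e * u) r'"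
  proof
    fix s assume sS: "s \<in> S"
    have "cmod (s - c0) \<le> r" using r sS by (auto simp: dist_norm norm_minus_commute)
    then have "cmod (s - (c0 - complex_of_real e * u))^2 \<le> r^2 - 2 * e * dl + e^2 * cmod u ^ 2"
      using dlle[OF sS] e0 by (intro dist_after_shift) auto
    then have "cmod (s - (c0 - complex_of_real e * u))^2 \<le> r^2 - e * dl" using eu by linarith
    then have "cmod (s - (c0 - complex_of_real e * u)) \<le> r'" unfolding r'_def by (simp add: real_le_rsqrt)
    then show "s \<in> cball (c0 - complex_of_real e * u) r'" by (simp add: dist_norm norm_minus_commute)
  qed
  then have "r \<le> r'" using rmin by blast
  moreover have "r' < r"
  proof -
    have "r^2 - e * dl < r^2" using e0 dl0 by simp
    then have "r' < sqrt (r^2)" unfolding r'_def by (rule real_sqrt_less_mono)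
    then show ?thesis using rr by simp
  qed
  ultimately show False by simp
qed

lemma sed_center_in_halfplane:
  assumes "sed_center S c0" "finite S" "S \<noteq> {}" "\<And>s. s \<in> S \<Longrightarrow> Re ((s - c) * cnj u) \<le> b"
  shows "Re ((c0 - c) * cnj u) \<le> b"
proof -
  obtain s where s: "s \<in> S" "Re ((s - c0) * cnj u) \<ge> 0"
    using sed_center_halfplane[OF assms(1-3)] by blast
  have "Re ((c0 - c) * cnj u) = Re ((s - c) * cnj u) - Re ((s - c0) * cnj u)"
    by (simp add: algebra_simps)
  then show ?thesis using assms(4)[OF s(1)] s(2) by linarith
qed

section \<open>Equiangular sets are angularly separated\<close>

text \<open>Any two distinct points of S subtend an angle of at least al at c0 (stated via the
  inner product, which avoids Arg and arccos).\<close>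
definition angularly_separated :: "complex set \<Rightarrow> complex \<Rightarrow> real \<Rightarrow> bool" where
  "angularly_separated S c0 al \<longleftrightarrow> (\<forall>p\<in>S. \<forall>q\<in>S. p \<noteq> q \<longrightarrow>
     Re ((p - c0) * cnj (q - c0)) \<le> cmod (p - c0) * cmod (q - c0) * cos al)"

text \<open>If n increasing angles within one turn have all cyclically consecutive gaps with cosine
  cos al, then each of these gaps is at least al, hence any two of the angles differ by an
  amount in [al, 2pi - al].\<close>
lemma cyclic_gaps_bound:
  fixes a :: "nat \<Rightarrow> real"
  assumes n2: "n \<ge> 2" and al0: "0 < al" and alpi: "al \<le> pi"
    and mono: "\<And>i j. i < j \<Longrightarrow> j < n \<Longrightarrow> a i < a j"
    and wrap: "\<And>i. i < n \<Longrightarrow> a i < a 0 + 2 * pi"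
    and gap: "\<And>i. i < n \<Longrightarrow> cos (a i - a ((i + 1) mod n)) = cos al"
    and ij: "i < j" "j < n"
  shows "al \<le> a j - a i \<and> a j - a i \<le> 2*pi - al"
proof -
  have amono: "a i \<le> a j" if "i \<le> j" "j < n" for i j
    using mono[of i j] that by (cases "i = j") auto
  have gaps: "al \<le> a (Suc i) - a i" if "Suc i < n" for i
  proof (rule ge_of_cos_eq[OF _ _ _ al0 alpi])
    show "0 < a (Suc i) - a i" using mono that by auto
    show "a (Suc i) - a i < 2 * pi" using wrap[of "Suc i"] amono[of 0 i] that by simp
    have "cos (a i - a (Suc i)) = cos al" using gap[of i] that by simp
    then show "cos (a (Suc i) - a i) = cos al" by (metis cos_minus minus_diff_eq)
  qed
  define D where "D = a 0 + 2*pi - a (n - 1)"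
  have Dal: "al \<le> D"
  proof (rule ge_of_cos_eq[OF _ _ _ al0 alpi])
    show "0 < D" unfolding D_def using wrap n2 by simp
    show "D < 2 * pi" unfolding D_def using mono[of 0 "n - 1"] n2 by simp
    have "(n - 1 + 1) mod n = 0" using n2 by simp
    then have "cos (a (n - 1) - a 0) = cos al" using gap[of "n - 1"] n2 by simp
    moreover have "a (n - 1) - a 0 = 2*pi - D" unfolding D_def by simp
    ultimately show "cos D = cos al" by simp
  qed
  obtain j' where j': "j = Suc j'" using ij gr0_implies_Suc by fastforce
  show ?thesis
  proof
    show "al \<le> a j - a i" using gaps[of j'] amono[of i j'] j' ij by simp
    have "a j \<le> a (n - 1)" "a 0 \<le> a i" using amono ij by auto
    then show "a j - a i \<le> 2*pi - al" using Dal unfolding D_def by simp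
  qed
qed

lemma Equiangular_separated:
  fixes S :: "complex set" and c0 :: complex
  assumes eq: "Equiangular S c0" and n2: "card S \<ge> 2" and c0S: "c0 \<notin> S"
  shows "angularly_separated S c0 (2 * pi / card S)"
proof -
  define n where "n = card S"
  define al where "al = 2 * pi / n"
  have rn: "real n \<ge> 2" using n2 unfolding n_def by simp
  have al0: "0 < al" and alpi: "al \<le> pi" unfolding al_def using rn by (auto simp: field_simps)
  obtain p :: "nat \<Rightarrow> complex" and a :: "nat \<Rightarrow> real" where
    bij: "bij_betw p {..<n} S" and rep: "\<forall>i<n. p i = c0 + complex_of_real (cmod (p i - c0)) * cis (a i)"
    and mono: "\<forall>i j. i < j \<and> j < n \<longrightarrow> a i < a j" and wrap: "\<forall>i<n. a i < a 0 + 2 * pi"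
    and ang: "\<forall>i<n. angle_at c0 (p i) (p ((i + 1) mod n)) = 2 * pi / real n"
    using eq unfolding Equiangular_def n_def Let_def by blast
  have pS: "i < n \<Longrightarrow> p i \<in> S" for i using bij by (auto simp: bij_betw_def)
  define rh where "rh i = cmod (p i - c0)" for i
  have rh0: "i < n \<Longrightarrow> rh i > 0" for i using pS c0S unfolding rh_def by fastforce
  have polar: "p i - c0 = complex_of_real (rh i) * cis (a i)" if "i < n" for i
    using rep that unfolding rh_def by (metis add_diff_cancel_left')
  have reij: "Re ((p i - c0) * cnj (p j - c0)) = rh i * rh j * cos (a i - a j)" if "i < n" "j < n" for i j
  proof -
    have "(p i - c0) * cnj (p j - c0) = complex_of_real (rh i * rh j) * (cis (a i) * cnj (cis (a j)))"
      unfolding polar[OF that(1)] polar[OF that(2)] by (simp add: algebra_simps)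
    then show ?thesis by (simp add: cis_cnj_mult)
  qed
  have gap: "cos (a i - a ((i + 1) mod n)) = cos al" if "i < n" for i
  proof -
    define j where "j = (i + 1) mod n"
    have jn: "j < n" unfolding j_def using that by simp
    have inn: "(p i - c0) \<bullet> (p j - c0) = Re ((p i - c0) * cnj (p j - c0))"
      by (simp add: inner_complex_def algebra_simps)
    have "angle_at c0 (p i) (p j) = arccos (cos (a i - a j))"
      unfolding angle_at_def inn reij[OF that jn] using rh0[OF that] rh0[OF jn] unfolding rh_def by simp
    then have "arccos (cos (a i - a j)) = al" using ang that unfolding j_def al_def by simp
    then have "cos (arccos (cos (a i - a j))) = cos al" by simp
    then show ?thesis unfolding j_def[symmetric] by simp
  qed
  have bound: "al \<le> a j - a i \<and> a j - a i \<le> 2*pi - al" if "i < j" "j < n" for i j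
    using that mono wrap rn al0 alpi gap by (intro cyclic_gaps_bound[where a = a and n = n]) auto
  show ?thesis unfolding angularly_separated_def
  proof (intro ballI impI)
    fix x y assume xS: "x \<in> S" and yS: "y \<in> S" and xy: "x \<noteq> y"
    obtain i where i: "i < n" "x = p i" using xS bij by (auto simp: bij_betw_def)
    obtain j where j: "j < n" "y = p j" using yS bij by (auto simp: bij_betw_def)
    have "cos (a i - a j) \<le> cos al"
    proof (cases "i < j")
      case True
      have "cos (a j - a i) \<le> cos al"
        using bound[OF True j(1)] al0 alpi by (intro cos_le_cos_on_range) auto
      then show ?thesis by (metis cos_minus minus_diff_eq)
    next
      case False
      then have "j < i" using i j xy by (metis linorder_neqE_nat)
      then show ?thesis
        using bound[OF _ i(1)] al0 alpi by (intro cos_le_cos_on_range) auto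
    qed
    then have "rh i * rh j * cos (a i - a j) \<le> rh i * rh j * cos al"
      using rh0 i j by (intro mult_left_mono) (auto intro: less_imp_le)
    then show "Re ((x - c0) * cnj (y - c0)) \<le> cmod (x - c0) * cmod (y - c0) * cos (2*pi / card S)"
      using reij[OF i(1) j(1)] i j unfolding rh_def al_def n_def by simp
  qed
qed

section \<open>The estimate on a full edge\<close>

lemma angle_bound_inner_cross:
  fixes dot cr cs sn :: real
  assumes cs: "0 < cs" and sn: "0 < sn" and pyth: "cs^2 + sn^2 = 1" and cr0: "cr \<ge> 0"
    and hyp: "dot \<le> sqrt (dot^2 + cr^2) * cs"
  shows "dot * sn \<le> cr * cs"
proof (cases "dot \<le> 0")
  case True
  then have "dot * sn \<le> 0" using sn by (simp add: mult_nonpos_nonneg)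
  also have "0 \<le> cr * cs" using cr0 cs by simp
  finally show ?thesis .
next
  case False
  have "dot^2 \<le> (sqrt (dot^2 + cr^2) * cs)^2"
    using hyp False by (intro power_mono) auto
  also have "\<dots> = (dot^2 + cr^2) * cs^2" by (simp add: power_mult_distrib)
  finally have h2: "dot^2 \<le> (dot^2 + cr^2) * cs^2" .
  have sn2: "sn^2 = 1 - cs^2" using pyth by simp
  have "(dot * sn)^2 = dot^2 - dot^2 * cs^2" by (simp add: power_mult_distrib sn2 algebra_simps)
  also have "\<dots> \<le> (cr * cs)^2" using h2 by (simp add: power_mult_distrib algebra_simps)
  finally show ?thesis by (rule power2_le_imp_le) (use cr0 cs in simp)
qed

text \<open>Real-coordinate core of the edge estimate.  A chord from height -w to w lies on a vertical
  line at horizontal distance a >= 0 from an observer, who sits at height q.  If two points of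
  the chord at heights s1 < s2 subtend an angle al at the observer (cs = cos al, sn = sin al),
  then the observer lies in the disk a^2 + q^2 - w^2 <= 2 a w cot al bounded by the circle
  arc through the chord's endpoints seen under angle al; on that arc (a > 0) the two points
  must be the endpoints of the chord.\<close>
lemma chord_angle_bound:
  fixes a q s1 s2 w cs sn :: real
  assumes cs: "0 < cs" and sn: "0 < sn" and pyth: "cs^2 + sn^2 = 1"
    and a0: "a \<ge> 0" and s12: "s1 < s2" and s1w: "-w \<le> s1" and s2w: "s2 \<le> w"
    and U: "a^2 + (s1-q)^2 > 0" and W: "a^2 + (s2 - q)^2 > 0"
    and hyp: "a^2 + (s1-q)*(s2-q) \<le> sqrt (a^2 + (s1-q)^2) * sqrt (a^2 + (s2-q)^2) * cs"
  shows "a^2 + q^2 - w^2 \<le> 2*a*w*(cs/sn)"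
    and "a > 0 \<Longrightarrow> a^2 + q^2 - w^2 = 2*a*w*(cs/sn) \<Longrightarrow> s1 = -w \<and> s2 = w"
proof -
  define k where "k = cs / sn"
  define dot where "dot = a^2 + (s1-q)*(s2-q)"
  define cr where "cr = a * (s2 - s1)"
  have cr0: "cr \<ge> 0" unfolding cr_def using a0 s12 by simp
  have lag: "(a^2 + (s1-q)^2) * (a^2 + (s2-q)^2) = dot^2 + cr^2"
    unfolding dot_def cr_def by (simp add: power2_eq_square algebra_simps)
  have "sqrt (dot^2 + cr^2) = sqrt (a^2 + (s1-q)^2) * sqrt (a^2 + (s2-q)^2)"
    unfolding lag[symmetric] by (simp add: real_sqrt_mult)
  then have "dot \<le> sqrt (dot^2 + cr^2) * cs" using hyp unfolding dot_def by simp
  then have st1: "dot * sn \<le> cr * cs" by (rule angle_bound_inner_cross[OF cs sn pyth cr0])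
  text \<open>E is affine in each of the two heights; the claim is E (-w) w <= 0, reached from
    E s1 s2 <= 0 by moving s2 up to w and then s1 down to -w, neither of which increases E.\<close>
  define E where "E x y = a^2 + (x - q)*(y - q) - a*k*(y - x)" for x y
  have E12: "E s1 s2 \<le> 0"
  proof -
    have "dot \<le> cr * k" using st1 sn unfolding k_def by (simp add: field_simps)
    then show ?thesis unfolding E_def dot_def cr_def by (simp add: algebra_simps)
  qed
  define L where "L = (s1 - q) - a*k"
  have Elin: "E s1 t = E s1 s1 + (t - s1) * L" for t unfolding E_def L_def by (simp add: algebra_simps)
  have E11: "E s1 s1 > 0" using U unfolding E_def by (simp add: power2_eq_square)
  have "(s2 - s1) * L < 0" using Elin[of s2] E12 E11 by linarith
  then have L0: "L < 0" using s12 by (simp add: mult_less_0_iff)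
  have E1w: "E s1 w \<le> E s1 s2"
  proof -
    have "(w - s2) * L \<le> 0" using s2w L0 by (simp add: mult_nonneg_nonpos)
    moreover have "(w - s1) * L = (s2 - s1) * L + (w - s2) * L" by (simp add: algebra_simps)
    ultimately show ?thesis using Elin[of w] Elin[of s2] by linarith
  qed
  define L' where "L' = (w - q) + a*k"
  have Elin': "E t w = E w w + (t - w) * L'" for t unfolding E_def L'_def by (simp add: algebra_simps)
  have Eww: "E w w = a^2 + (w - q)^2" unfolding E_def by (simp add: power2_eq_square)
  have "(s1 - w) * L' \<le> 0" using Elin'[of s1] Eww E1w E12 by (smt (verit) zero_le_power2)
  then have L'0: "L' \<ge> 0" using s12 s2w by (simp add: mult_le_0_iff)
  have Emw: "E (-w) w \<le> E s1 w"
  proof -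
    have "(-w - s1) * L' \<le> 0" using s1w L'0 by (simp add: mult_nonpos_nonneg)
    moreover have "(-w - w) * L' = (s1 - w) * L' + (-w - s1) * L'" by (simp add: algebra_simps)
    ultimately show ?thesis using Elin'[of "-w"] Elin'[of s1] by linarith
  qed
  have Emw_eq: "E (-w) w = a^2 + q^2 - w^2 - 2*a*w*k" unfolding E_def by (simp add: power2_eq_square algebra_simps)
  show "a^2 + q^2 - w^2 \<le> 2*a*w*(cs/sn)" using Emw E1w E12 Emw_eq unfolding k_def by linarith
  assume apos: "a > 0" and eq: "a^2 + q^2 - w^2 = 2*a*w*(cs/sn)"
  then have z: "E (-w) w = 0" using Emw_eq unfolding k_def by simp
  then have e1: "E s1 w = E s1 s2" and e2: "E (-w) w = E s1 w" using Emw E1w E12 by linarith+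
  have "(w - s1) * L = (s2 - s1) * L + (w - s2) * L" by (simp add: algebra_simps)
  then have "(w - s2) * L = 0" using e1 Elin[of w] Elin[of s2] by linarith
  then have "s2 = w" using L0 by simp
  have "(s1 - w) * L' = E s1 w - E w w" using Elin'[of s1] by linarith
  also have "\<dots> < 0" using e1 e2 z Eww apos by (smt (verit) zero_less_power2 zero_le_power2)
  finally have "L' > 0" using s12 s2w by (simp add: mult_less_0_iff)
  have "(-w - w) * L' = (s1 - w) * L' + (-w - s1) * L'" by (simp add: algebra_simps)
  then have "(-w - s1) * L' = 0" using e2 Elin'[of "-w"] Elin'[of s1] by linarith
  then have "s1 = -w" using \<open>L' > 0\<close> by simp
  then show "s1 = -w \<and> s2 = w" using \<open>s2 = w\<close> by simp
qed

text \<open>The chord estimate in complex notation: the chord is the segment Re = h, |Im| <= w of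
  the unit circle (h = cos(pi/n), w = sin(pi/n)), two of its points X, Y are seen from P under
  an angle at least 2pi/n (cs = cos(2pi/n)), and P is on the inner side of the chord.\<close>
lemma chord_angle_edge_frame:
  fixes X Y P :: complex and h w cs sn :: real
  assumes h0: "h > 0" and w0: "w > 0" and hw: "h^2 + w^2 = 1" and csd: "cs = h^2 - w^2" and snd: "sn = 2*w*h"
    and cs0: "cs > 0"
    and RX: "Re X = h" and RY: "Re Y = h" and IX: "\<bar>Im X\<bar> \<le> w" and IY: "\<bar>Im Y\<bar> \<le> w"
    and XY: "X \<noteq> Y" and XP: "X \<noteq> P" and YP: "Y \<noteq> P" and RP: "Re P \<le> h"
    and ang: "Re ((X - P) * cnj (Y - P)) \<le> cmod (X - P) * cmod (Y - P) * cs"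
  shows "cmod P ^ 2 \<le> Re P / h"
    and "P = 0 \<Longrightarrow> (Im X = -w \<and> Im Y = w) \<or> (Im X = w \<and> Im Y = -w)"
proof -
  define p q where "p = Re P" and "q = Im P"
  define a where "a = h - p"
  have a0: "a \<ge> 0" unfolding a_def p_def using RP by simp
  have sn0: "sn > 0" unfolding snd using h0 w0 by simp
  have pyth: "cs^2 + sn^2 = 1"
  proof -
    have "cs^2 + sn^2 = (h^2 + w^2)^2" unfolding csd snd by (simp add: power2_eq_square algebra_simps)
    then show ?thesis using hw by simp
  qed
  have cm: "cmod (Z - P) = sqrt (a^2 + (Im Z - q)^2)" if "Re Z = h" for Z
    unfolding cmod_def a_def p_def q_def using that by simp
  have re: "Re ((Z1 - P) * cnj (Z2 - P)) = a^2 + (Im Z1 - q) * (Im Z2 - q)" if "Re Z1 = h" "Re Z2 = h" for Z1 Z2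
    unfolding a_def p_def q_def using that by (simp add: power2_eq_square algebra_simps)
  have nz: "a^2 + (Im Z - q)^2 > 0" if "Re Z = h" "Z \<noteq> P" for Z
  proof -
    have "a \<noteq> 0 \<or> Im Z \<noteq> q" using that unfolding a_def p_def q_def by (metis complex_eqI diff_self eq_iff_diff_eq_0)
    then show ?thesis by (auto simp: add_pos_nonneg add_nonneg_pos)
  qed
  have key: "a^2 + q^2 - w^2 \<le> 2*a*w*(cs/sn) \<and> (a > 0 \<longrightarrow> a^2 + q^2 - w^2 = 2*a*w*(cs/sn) \<longrightarrow> (Im X = -w \<and> Im Y = w) \<or> (Im X = w \<and> Im Y = -w))"
  proof (cases "Im X < Im Y")
    case True
    have h: "a^2 + (Im X - q)*(Im Y - q) \<le> sqrt (a^2 + (Im X - q)^2) * sqrt (a^2 + (Im Y - q)^2) * cs"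
      using ang re[OF RX RY] cm[OF RX] cm[OF RY] by simp
    note cr = chord_angle_bound[OF cs0 sn0 pyth a0 True _ _ nz[OF RX XP] nz[OF RY YP] h]
    show ?thesis using cr IX IY by auto
  next
    case False
    then have lt: "Im Y < Im X" using XY RX RY by (metis complex_eqI linorder_neqE_linordered_idom)
    have h: "a^2 + (Im Y - q)*(Im X - q) \<le> sqrt (a^2 + (Im Y - q)^2) * sqrt (a^2 + (Im X - q)^2) * cs"
      using ang re[OF RX RY] cm[OF RX] cm[OF RY] by (simp add: mult.commute mult.left_commute)
    note cr = chord_angle_bound[OF cs0 sn0 pyth a0 lt _ _ nz[OF RY YP] nz[OF RX XP] h]
    show ?thesis using cr IX IY by auto
  qed
  have fac: "2*a*w*(cs/sn) = a * cs / h" unfolding snd using w0 h0 by (simp add: field_simps)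
  have "p^2 + q^2 \<le> p / h"
  proof -
    have "a^2 + q^2 - w^2 \<le> a * cs / h" using key fac by simp
    then have "h * (a^2 + q^2 - w^2) \<le> a * cs" using h0 by (simp add: field_simps)
    moreover have "a * cs - h * (a^2 + q^2 - w^2) = p * (h^2 + w^2) - h * (p^2 + q^2)"
      unfolding a_def csd by (simp add: power2_eq_square algebra_simps)
    ultimately have "h * (p^2 + q^2) \<le> p" using hw by simp
    then show ?thesis using h0 by (simp add: field_simps)
  qed
  then show "cmod P ^ 2 \<le> Re P / h" unfolding p_def q_def by (simp add: cmod_power2)
  assume "P = 0"
  then have "p = 0" "q = 0" "a = h" unfolding p_def q_def a_def by auto
  moreover have "h^2 - w^2 = h * cs / h" using h0 csd by simp
  ultimately show "(Im X = -w \<and> Im Y = w) \<or> (Im X = w \<and> Im Y = -w)" using key fac h0 csd by auto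
qed

text \<open>Coordinates adapted to edge k: rotate so that its outer normal points along the real
  axis and scale the circumradius to 1; edge k then lies on the line Re = cos(pi/n).\<close>
definition edge_coord :: "complex \<Rightarrow> real \<Rightarrow> real \<Rightarrow> nat \<Rightarrow> nat \<Rightarrow> complex \<Rightarrow> complex" where
  "edge_coord c r th n k z = (z - c) * cnj (edge_normal th n k) / complex_of_real r"

lemma edge_coord_similarity:
  fixes c x y z :: complex and r th :: real and n k :: nat
  defines "L \<equiv> edge_coord c r th n k"
  assumes r0: "r > 0"
  shows "Re ((x - y) * cnj (z - y)) = r^2 * Re ((L x - L y) * cnj (L z - L y))"
    and "cmod (x - y) = r * cmod (L x - L y)"
    and "L x = L y \<Longrightarrow> x = y"
proof -
  define e where "e = edge_normal th n k"
  have ee: "e * cnj e = 1" unfolding e_def by (rule edge_normal_unit)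
  have diff: "x - y = complex_of_real r * e * (L x - L y)" for x y
  proof -
    have "L x - L y = (x - y) * cnj e / complex_of_real r"
      unfolding L_def edge_coord_def e_def by (simp add: diff_divide_distrib left_diff_distrib)
    then have "complex_of_real r * e * (L x - L y) = (x - y) * (e * cnj e)"
      using r0 by simp
    then show ?thesis using ee by simp
  qed
  have "(x - y) * cnj (z - y) = complex_of_real (r^2) * (e * cnj e) * ((L x - L y) * cnj (L z - L y))"
    unfolding diff[of x y] diff[of z y] by (simp add: power2_eq_square algebra_simps)
  then show "Re ((x - y) * cnj (z - y)) = r^2 * Re ((L x - L y) * cnj (L z - L y))"
    using ee by simp
  have "cmod e = 1" unfolding e_def edge_normal_def by simp
  then show "cmod (x - y) = r * cmod (L x - L y)" using diff[of x y] r0 by (simp add: norm_mult)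
  show "L x = L y \<Longrightarrow> x = y" using diff[of x y] by simp
qed

lemma edge_coord_on_edge:
  fixes c z :: complex and r th :: real and n k :: nat
  defines "V \<equiv> rpoly_vertex c r th n" and "L \<equiv> edge_coord c r th n k"
  assumes n0: "n > 0" and r0: "r > 0" and zs: "z \<in> closed_segment (V k) (V (Suc k))"
  obtains t where "0 \<le> t" "t \<le> 1" "z = complex_of_real (1 - t) * V k + complex_of_real t * V (Suc k)"
    "Re (L z) = cos (pi / n)" "Im (L z) = (2 * t - 1) * sin (pi / n)"
proof -
  have l0: "L (V k) = cis (- (pi / n))"
    using vertex_in_edge_frame[OF n0, of c r th k k] r0 unfolding L_def V_def edge_coord_def by simp
  have l1: "L (V (Suc k)) = cis (pi / n)"
    using vertex_in_edge_frame[OF n0, of c r th "Suc k" k] r0 unfolding L_def V_def edge_coord_def by simp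
  obtain t where t: "0 \<le> t" "t \<le> 1" "z = complex_of_real (1 - t) * V k + complex_of_real t * V (Suc k)"
    by (rule closed_segment_param[OF zs])
  have "L z = complex_of_real (1 - t) * L (V k) + complex_of_real t * L (V (Suc k))"
    unfolding L_def edge_coord_def t(3) using r0 by (simp add: field_simps)
  then have lz: "L z = complex_of_real (1 - t) * cis (- (pi / n)) + complex_of_real t * cis (pi / n)"
    using l0 l1 by simp
  have "Re (L z) = cos (pi / n)" "Im (L z) = (2 * t - 1) * sin (pi / n)"
    unfolding lz by (simp_all add: algebra_simps)
  then show ?thesis using that t by blast
qed

lemma edge_angle_estimate:
  fixes c Oc x y :: complex and r th :: real and n k :: nat
  defines "V \<equiv> rpoly_vertex c r th n" and "e \<equiv> edge_normal th n k" and "L \<equiv> edge_coord c r th n k"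
  assumes n5: "n \<ge> 5" and r0: "r > 0"
    and xs: "x \<in> closed_segment (V k) (V (Suc k))" and ys: "y \<in> closed_segment (V k) (V (Suc k))"
    and xy: "x \<noteq> y" and xO: "x \<noteq> Oc" and yO: "y \<noteq> Oc"
    and inner: "Re ((Oc - c) * cnj e) \<le> r * cos (pi / n)"
    and ang: "Re ((x - Oc) * cnj (y - Oc)) \<le> cmod (x - Oc) * cmod (y - Oc) * cos (2*pi/n)"
  shows "cmod (Oc - c)^2 \<le> (r / cos (pi / n)) * Re ((Oc - c) * cnj e)"
    and "Oc = c \<Longrightarrow> (x = V k \<and> y = V (Suc k)) \<or> (x = V (Suc k) \<and> y = V k)"
proof -
  have n0: "n > 0" using n5 by simp
  define h w where "h = cos (pi / n)" and "w = sin (pi / n)"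
  note tf = trig_facts_pi_div[OF n5, folded h_def w_def]
  note sim = edge_coord_similarity[OF r0, where c = c and th = th and n = n and k = k, folded L_def]
  define P where "P = L Oc"
  have Lc: "L c = 0" unfolding L_def edge_coord_def by simp
  have on_edge: "\<exists>t. z = complex_of_real (1 - t) * V k + complex_of_real t * V (Suc k) \<and>
      Re (L z) = h \<and> Im (L z) = (2 * t - 1) * w \<and> \<bar>Im (L z)\<bar> \<le> w"
    if zs: "z \<in> closed_segment (V k) (V (Suc k))" for z
  proof -
    obtain t where t: "0 \<le> t" "t \<le> 1" "z = complex_of_real (1 - t) * V k + complex_of_real t * V (Suc k)"
      "Re (L z) = h" "Im (L z) = (2 * t - 1) * w"
      by (rule edge_coord_on_edge[OF n0 r0 zs[unfolded V_def], folded L_def V_def h_def w_def])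
    have "\<bar>Im (L z)\<bar> \<le> w" using t tf(2) unfolding t(5)
      by (simp add: abs_mult abs_le_iff mult_le_cancel_right1)
    then show ?thesis using t by blast
  qed
  obtain t1 where t1: "x = complex_of_real (1 - t1) * V k + complex_of_real t1 * V (Suc k)"
      "Re (L x) = h" "Im (L x) = (2 * t1 - 1) * w" "\<bar>Im (L x)\<bar> \<le> w"
    using on_edge[OF xs] by blast
  obtain t2 where t2: "y = complex_of_real (1 - t2) * V k + complex_of_real t2 * V (Suc k)"
      "Re (L y) = h" "Im (L y) = (2 * t2 - 1) * w" "\<bar>Im (L y)\<bar> \<le> w"
    using on_edge[OF ys] by blast
  have ang': "Re ((L x - P) * cnj (L y - P)) \<le> cmod (L x - P) * cmod (L y - P) * cos (2*pi/n)"
  proof -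
    have "r^2 * Re ((L x - P) * cnj (L y - P)) \<le> r^2 * (cmod (L x - P) * cmod (L y - P) * cos (2*pi/n))"
      using ang unfolding P_def sim(1)[of x Oc y] sim(2)[of x Oc] sim(2)[of y Oc]
      by (simp only: power2_eq_square mult_ac)
    then show ?thesis using r0 by simp
  qed
  have R: "Re ((Oc - c) * cnj e) = r * Re P"
    unfolding P_def L_def edge_coord_def e_def using r0 by (simp add: Re_divide_of_real)
  have RP: "Re P \<le> h" using inner r0 unfolding R h_def by simp
  have M: "cmod (Oc - c) = r * cmod P" using sim(2)[of Oc c] unfolding P_def Lc by simp
  have LO: "L x \<noteq> L y" "L x \<noteq> P" "L y \<noteq> P" using xy xO yO sim(3) unfolding P_def by blast+
  note CL = chord_angle_edge_frame[OF tf(1,2,3) tf(4) tf(5) tf(6) t1(2) t2(2) t1(4) t2(4) LO RP ang']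
  have "cmod (Oc - c)^2 = r^2 * cmod P ^ 2" unfolding M by (simp add: power_mult_distrib)
  also have "\<dots> \<le> r^2 * (Re P / h)" using CL(1) by (intro mult_left_mono) auto
  also have "\<dots> = (r / h) * (r * Re P)" by (simp add: power2_eq_square)
  finally show "cmod (Oc - c)^2 \<le> (r / cos (pi / n)) * Re ((Oc - c) * cnj e)" unfolding R h_def .
  assume "Oc = c"
  then have "P = 0" unfolding P_def using Lc by simp
  then have "(Im (L x) = -w \<and> Im (L y) = w) \<or> (Im (L x) = w \<and> Im (L y) = -w)" by (rule CL(2))
  moreover have "t = 0" if "(2 * t - 1) * w = -w" for t using that tf(2) by (simp add: algebra_simps)
  moreover have "t = 1" if "(2 * t - 1) * w = w" for t using that tf(2) by (simp add: algebra_simps)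
  ultimately have "(t1 = 0 \<and> t2 = 1) \<or> (t1 = 1 \<and> t2 = 0)" using t1(3) t2(3) by metis
  then show "(x = V k \<and> y = V (Suc k)) \<or> (x = V (Suc k) \<and> y = V k)" using t1(1) t2(1) by auto
qed

section \<open>Rigidity: the centre of SED(S) is the centre of the polygon\<close>

lemma edge_normal_int:
  assumes "n > 0"
  shows "edge_normal th n (nat (k mod int n)) = cis (th + 2 * pi * of_int k / real n + pi / real n)"
proof -
  have "real_of_int k = real_of_int (k mod int n) + real n * real_of_int (k div int n)"
    by (metis mult_div_mod_eq add.commute of_int_add of_int_mult of_int_of_nat_eq)
  then have "th + 2 * pi * of_int k / real n + pi / real n =
      (th + 2 * pi * of_int (k mod int n) / real n + pi / real n) + 2 * pi * of_int (k div int n)"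
    using assms by (simp add: field_simps)
  then have "cis (th + 2 * pi * of_int k / real n + pi / real n) =
      cis (th + 2 * pi * of_int (k mod int n) / real n + pi / real n) * cis (2 * pi * of_int (k div int n))"
    by (simp only: cis_mult)
  also have "cis (2 * pi * of_int (k div int n)) = 1" by (intro cis_multiple_2pi) simp
  finally show ?thesis unfolding edge_normal_def using assms by simp
qed

lemma consecutive_normals_opposite:
  fixes d :: complex
  assumes n4: "n \<ge> 4"
  obtains k where "k < n" "Re (d * cnj (edge_normal th n k)) \<le> 0"
    "Re (d * cnj (edge_normal th n (Suc k mod n))) \<le> 0"
proof -
  have n0: "n > 0" using n4 by simp
  define al where "al = 2 * pi / n"
  have al0: "al > 0" unfolding al_def using n0 by simp
  have al2: "2 * al \<le> pi" unfolding al_def using n4 by (simp add: field_simps)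
  text \<open>Normal j is at angle x j below the direction of d; choose m such that the normals
    m and m+1 both lie between 90 and 270 degrees below d.\<close>
  define Y where "Y = Arg d - th - pi / n + pi / 2"
  define m where "m = \<lceil>Y / al\<rceil>"
  have "Y / al \<le> of_int m" "of_int m - 1 < Y / al" using ceiling_correct[of "Y / al"] unfolding m_def by auto
  then have m1: "Y \<le> of_int m * al" and m2: "of_int m * al < Y + al"
    using al0 by (simp_all add: divide_le_eq less_divide_eq algebra_simps)
  define x where "x j = Arg d - (th + 2 * pi * of_int j / real n + pi / real n)" for j :: int
  have xj: "x j = Y - pi/2 - of_int j * al" for j unfolding x_def Y_def al_def by (simp add: field_simps)
  have cneg: "cos (x j) \<le> 0" if "j = m \<or> j = m + 1" for j
  proof (rule cos_nonpos_range)
    have e: "of_int (m + 1) * al = of_int m * al + al" by (simp add: algebra_simps)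
    show "- (3 * pi / 2) \<le> x j" using that xj[of m] xj[of "m+1"] e m2 al2 pi_gt_zero
      by (elim disjE; hypsubst; linarith)
    show "x j \<le> - (pi / 2)" using that xj[of m] xj[of "m+1"] e m1 al0 by (elim disjE; hypsubst; linarith)
  qed
  have re: "Re (d * cnj (edge_normal th n (nat (j mod int n)))) = cmod d * cos (x j)" for j
    unfolding edge_normal_int[OF n0] x_def by (rule Re_mult_cnj_cis)
  define k where "k = nat (m mod int n)"
  have kn: "k < n" unfolding k_def using n0 by (simp add: nat_less_iff)
  have k1: "Suc k mod n = nat ((m + 1) mod int n)"
  proof -
    have "int (Suc k mod n) = (int k + 1) mod int n" by (simp add: zmod_int add.commute)
    also have "\<dots> = (m + 1) mod int n" unfolding k_def using n0 by (simp add: mod_add_left_eq)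
    finally show ?thesis by (metis nat_int)
  qed
  show ?thesis
  proof (rule that[OF kn])
    show "Re (d * cnj (edge_normal th n k)) \<le> 0"
      using re[of m] cneg[of m] unfolding k_def by (simp add: mult_nonneg_nonpos)
    show "Re (d * cnj (edge_normal th n (Suc k mod n))) \<le> 0"
      using re[of "m+1"] cneg[of "m+1"] unfolding k1 by (simp add: mult_nonneg_nonpos)
  qed
qed

lemma center_offset_zero:
  fixes d :: complex and F :: "nat set"
  assumes n4: "n \<ge> 4" and rho: "rho > 0"
    and cov: "\<forall>k<n. k \<in> F \<or> Suc k mod n \<in> F"
    and est: "\<And>k. k \<in> F \<Longrightarrow> cmod d ^ 2 \<le> rho * Re (d * cnj (edge_normal th n k))"
  shows "d = 0"
proof (rule ccontr)
  assume d0: "d \<noteq> 0"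
  have pos: "Re (d * cnj (edge_normal th n k)) > 0" if "k \<in> F" for k
  proof -
    have "0 < rho * Re (d * cnj (edge_normal th n k))" using est[OF that] d0
      by (smt (verit) zero_less_norm_iff zero_less_power)
    then show ?thesis using rho by (simp add: zero_less_mult_iff)
  qed
  obtain k where "k < n" "Re (d * cnj (edge_normal th n k)) \<le> 0"
    "Re (d * cnj (edge_normal th n (Suc k mod n))) \<le> 0"
    using consecutive_normals_opposite[OF n4] by blast
  then show False using cov pos by (meson not_less)
qed

lemma full_edge_estimate:
  fixes S :: "complex set" and c c0 :: complex and r th :: real and n k :: nat
  defines "V \<equiv> rpoly_vertex c r th n"
  assumes n5: "n \<ge> 5" and r0: "r > 0" and kF: "k \<in> full_edges S c r th n" and c0S: "c0 \<notin> S"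
    and sep: "angularly_separated S c0 (2 * pi / n)"
    and inner: "Re ((c0 - c) * cnj (edge_normal th n k)) \<le> r * cos (pi / n)"
  shows "cmod (c0 - c)^2 \<le> (r / cos (pi / n)) * Re ((c0 - c) * cnj (edge_normal th n k))"
    and "c0 = c \<Longrightarrow> V k \<in> S \<and> V (Suc k) \<in> S"
proof -
  have n3: "n \<ge> 3" using n5 by simp
  obtain x y where xy: "x \<in> S" "y \<in> S" "x \<noteq> y"
    "x \<in> closed_segment (V k) (V (Suc k))" "y \<in> closed_segment (V k) (V (Suc k))"
    using full_edge_points[OF n3 r0 kF] unfolding V_def by blast
  have ne: "x \<noteq> c0" "y \<noteq> c0" using xy c0S by auto
  have ang: "Re ((x - c0) * cnj (y - c0)) \<le> cmod (x - c0) * cmod (y - c0) * cos (2 * pi / n)"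
    using sep xy unfolding angularly_separated_def by blast
  note est = edge_angle_estimate[OF n5 r0 xy(4,5)[unfolded V_def] xy(3) ne inner ang]
  show "cmod (c0 - c)^2 \<le> (r / cos (pi / n)) * Re ((c0 - c) * cnj (edge_normal th n k))"
    by (rule est(1))
  show "c0 = c \<Longrightarrow> V k \<in> S \<and> V (Suc k) \<in> S" using est(2) xy unfolding V_def by auto
qed

lemma full_edges_vertices:
  assumes cov: "\<forall>k<n. k \<in> F \<or> Suc k mod n \<in> F"
    and ends: "\<And>k. k \<in> F \<Longrightarrow> V k \<in> S \<and> V (Suc k) \<in> S"
    and Vmod: "\<And>m. V (m mod n) = V m"
    and jn: "j < n"
  shows "V j \<in> S"
proof (cases "j \<in> F")
  case True
  then show ?thesis using ends by blast
next
  case False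
  define p where "p = (j + n - 1) mod n"
  have p: "p < n" "Suc p mod n = j" using pred_mod[OF jn] unfolding p_def by auto
  then have "p \<in> F" using cov False by metis
  then have "V (Suc p) \<in> S" using ends by blast
  then show ?thesis using Vmod[of "Suc p"] p(2) by simp
qed

lemma Regular_if_vertices_in:
  assumes fin: "finite S" and n3: "card S \<ge> 3" and r0: "r > 0"
    and sub: "\<And>j. j < card S \<Longrightarrow> rpoly_vertex c r th (card S) j \<in> S"
  shows "Regular S"
proof -
  have "rpoly_vertex c r th (card S) ` {..<card S} \<subseteq> S" using sub by auto
  then have "S = rpoly_vertex c r th (card S) ` {..<card S}"
    using card_subset_eq[OF fin] rpoly_vertices_card[OF n3 r0] by metis
  then show ?thesis unfolding Regular_def regular_ngon_def using n3 r0 by blast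
qed

theorem lemma5p12:
  fixes S :: "complex set" and c0 :: complex
  assumes "finite S"
    and "card S > 4"
    and "sed_center S c0"
    and "c0 \<notin> S"
    and "\<forall>p\<in>S. \<forall>q\<in>S. p \<noteq> q \<longrightarrow> \<not> (\<exists>t>0. p - c0 = complex_of_real t * (q - c0))"
    and "Pre_regular S"
    and "Equiangular S c0"
  shows "Regular S"
proof -
  define n where "n = card S"
  have n5: "n \<ge> 5" using assms(2) unfolding n_def by simp
  obtain c r th where r0: "r > 0"
    and cov: "\<forall>k<n. k \<in> full_edges S c r th n \<or> Suc k mod n \<in> full_edges S c r th n"
    using Pre_regular_full_edges[OF assms(6)] unfolding n_def by metis
  have inner: "Re ((c0 - c) * cnj (edge_normal th n k)) \<le> r * cos (pi / n)" for k
    using assms(1) n5 r0 cov unfolding n_def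
    by (intro sed_center_in_halfplane[OF assms(3,1)] full_edges_cover_support) auto
  have sep: "angularly_separated S c0 (2 * pi / n)"
    using Equiangular_separated[OF assms(7) _ assms(4)] n5 unfolding n_def by simp
  note est = full_edge_estimate[OF n5 r0 _ assms(4) sep inner]
  have rho: "r / cos (pi / n) > 0" using r0 trig_facts_pi_div(1)[OF n5] by simp
  have "c0 - c = 0" by (rule center_offset_zero[OF _ rho cov est(1)]) (use n5 in simp)
  then have ends: "\<And>k. k \<in> full_edges S c r th n \<Longrightarrow>
      rpoly_vertex c r th n k \<in> S \<and> rpoly_vertex c r th n (Suc k) \<in> S"
    using est(2) by simp
  have "rpoly_vertex c r th n j \<in> S" if "j < n" for j
    using full_edges_vertices[where V = "rpoly_vertex c r th n", OF cov ends _ that]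
      rpoly_vertex_mod[of n] n5 by simp
  then show ?thesis using n5 unfolding n_def by (intro Regular_if_vertices_in[OF assms(1) _ r0]) auto
qed

end
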